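(* Let $q$ be an odd prime and let $(G,H,T)$ be the envelope of a right conjugacy closed loop of order $2q$. Let $K$ be a subgroup with $H\lneq K\lneq G$, $|G:K|=q$ and $|K:H|=2$. If $K\trianglelefteq G$, then $G$ is abelian and $H=1$.
   Context: For a finite loop $\mathcal{L}$ with identity $e$: $G=\langle R_a\mid a\in\mathcal L\rangle$ with $R_a\colon x\mapsto xa$, $H$ the stabilizer of $e$ in $G$, $T=\{R_a\}$; $(G,H,T)$ is the envelope; the loop is right conjugacy closed if $T$ is a union of conjugacy classes of $G$. *)

theory Defs
  imports "HOL-Algebra.Algebra"
begin

definition is_loop :: "'a set \<Rightarrow> ('a \<Rightarrow> 'a \<Rightarrow> 'a) \<Rightarrow> 'a \<Rightarrow> bool" where
  "is_loop L m e \<longleftrightarrow> e \<in> L \<and> (\<forall>a\<in>L. \<forall>b\<in>L. m a b \<in> L)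
     \<and> (\<forall>a\<in>L. m e a = a \<and> m a e = a)
     \<and> (\<forall>a\<in>L. \<forall>b\<in>L. \<exists>!x. x \<in> L \<and> m a x = b)
     \<and> (\<forall>a\<in>L. \<forall>b\<in>L. \<exists>!y. y \<in> L \<and> m y a = b)"

definition Rmap :: "'a set \<Rightarrow> ('a \<Rightarrow> 'a \<Rightarrow> 'a) \<Rightarrow> 'a \<Rightarrow> ('a \<Rightarrow> 'a)" where
  "Rmap L m a = (\<lambda>x\<in>L. m x a)"

definition env_T :: "'a set \<Rightarrow> ('a \<Rightarrow> 'a \<Rightarrow> 'a) \<Rightarrow> ('a \<Rightarrow> 'a) set" where
  "env_T L m = Rmap L m ` L"

definition env_G :: "'a set \<Rightarrow> ('a \<Rightarrow> 'a \<Rightarrow> 'a) \<Rightarrow> ('a \<Rightarrow> 'a) monoid" where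
  "env_G L m = (BijGroup L) \<lparr>carrier := generate (BijGroup L) (env_T L m)\<rparr>"

definition env_H :: "'a set \<Rightarrow> ('a \<Rightarrow> 'a \<Rightarrow> 'a) \<Rightarrow> 'a \<Rightarrow> ('a \<Rightarrow> 'a) set" where
  "env_H L m e = {g \<in> carrier (env_G L m). g e = e}"

definition rcc_loop :: "'a set \<Rightarrow> ('a \<Rightarrow> 'a \<Rightarrow> 'a) \<Rightarrow> 'a \<Rightarrow> bool" where
  "rcc_loop L m e \<longleftrightarrow> is_loop L m e \<and>
     (\<forall>g\<in>carrier (env_G L m). \<forall>t\<in>env_T L m.
        g \<otimes>\<^bsub>env_G L m\<^esub> t \<otimes>\<^bsub>env_G L m\<^esub> inv\<^bsub>env_G L m\<^esub> g \<in> env_T L m)"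

end

theory Submission
  imports Defs
begin

(* Every K-orbit on L has |K:H| = 2 points (orbit-stabilizer, and K is normal in the transitive
   group G), so K, acting on two-point sets, is abelian.  For t in T the K-conjugates of t lie in T,
   and evaluation at e is injective on T and maps them into the K-orbit of t e; hence t has at most
   two K-conjugates.  For an abelian normal K this forces conjugation by t to be an involution on K,
   while t^q lies in the abelian group K since |G:K| = q; as q is odd, t centralises K.  T generates
   G, so K is central, and a group with a central subgroup of prime index is abelian.  Finally an
   abelian transitive permutation group has trivial point stabilisers, so H = 1. *)

lemma subset_pair_if_card_le_2:
  assumes "finite A" "card A \<le> 2" "z \<in> A"
  obtains w where "A \<subseteq> {z, w}"
proof -
  have "card (A - {z}) \<le> Suc 0" using assms by simp
  then obtain w where "A - {z} \<subseteq> {w}"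
    using assms(1) card_le_Suc0_iff_eq[of "A - {z}"] by (metis finite_Diff subsetI insertCI)
  then show ?thesis using that by blast
qed

lemma commute_on_two_point_set:
  assumes "A \<subseteq> {z, w}" "z \<in> A" "inj_on f A" "inj_on g A" "f ` A \<subseteq> A" "g ` A \<subseteq> A"
  shows "f (g z) = g (f z)"
  using assms
  by (smt (verit, ccfv_threshold) endo_inj_surj imageI insertE
    rev_finite_subset singletonD subset_eq the_inv_into_f_f)

definition centralizer :: "('a, 'b) monoid_scheme \<Rightarrow> 'a \<Rightarrow> 'a set" where
  "centralizer G a = {x \<in> carrier G. x \<otimes>\<^bsub>G\<^esub> a = a \<otimes>\<^bsub>G\<^esub> x}"

lemma (in group) inv_mult_cancel_left:
  "x \<in> carrier G \<Longrightarrow> y \<in> carrier G \<Longrightarrow> inv x \<otimes> (x \<otimes> y) = y"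
  by (simp flip: m_assoc)

lemma (in group) mult_inv_cancel_left:
  "x \<in> carrier G \<Longrightarrow> y \<in> carrier G \<Longrightarrow> x \<otimes> (inv x \<otimes> y) = y"
  by (simp flip: m_assoc)

lemma (in group) centralizer_subgroup:
  assumes "a \<in> carrier G"
  shows "subgroup (centralizer G a) G"
proof (rule subgroupI)
  fix x assume "x \<in> centralizer G a"
  then have x: "x \<in> carrier G" "x \<otimes> a = a \<otimes> x" by (auto simp: centralizer_def)
  have "inv x \<otimes> a = inv x \<otimes> (a \<otimes> x) \<otimes> inv x"
    using x assms by (simp add: m_assoc)
  also have "\<dots> = inv x \<otimes> (x \<otimes> a) \<otimes> inv x"
    using x by simp
  also have "\<dots> = a \<otimes> inv x"
    using x(1) assms by (simp flip: m_assoc)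
  finally show "inv x \<in> centralizer G a" using x by (simp add: centralizer_def)
next
  fix x y assume "x \<in> centralizer G a" "y \<in> centralizer G a"
  then show "x \<otimes> y \<in> centralizer G a"
    using assms by (auto simp: centralizer_def m_assoc) (metis m_assoc)
qed (use assms in \<open>auto simp: centralizer_def\<close>)

lemma (in group) mem_centralizer_odd_pow:
  assumes "a \<in> carrier G" "s \<in> carrier G" "odd (q::nat)"
    and "s \<otimes> s \<in> centralizer G a" "s [^] q \<in> centralizer G a"
  shows "s \<in> centralizer G a"
proof -
  interpret C: subgroup "centralizer G a" G using centralizer_subgroup[OF assms(1)] .
  obtain j where q: "q = Suc (2 * j)" using \<open>odd q\<close> oddE by fastforce
  have "s \<otimes> s = s [^] (2::nat)"
    using assms(2) by (simp add: numeral_2_eq_2)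
  then have "(s \<otimes> s) [^] j = s [^] (2 * j)"
    using assms(2) by (simp add: nat_pow_pow)
  then have "s [^] q = (s \<otimes> s) [^] j \<otimes> s"
    by (simp add: q)
  then have "s = inv ((s \<otimes> s) [^] j) \<otimes> s [^] q"
    using assms(2) by (simp add: m_assoc[symmetric])
  also have "\<dots> \<in> centralizer G a"
    using subgroup_int_pow_closed[OF C.subgroup_axioms assms(4), of "int j"] assms(5)
    by (simp add: int_pow_int)
  finally show ?thesis .
qed

lemma (in group) square_centralizes_abelian_normal:
  assumes "K \<lhd> G" and K_comm: "\<And>x y. x \<in> K \<Longrightarrow> y \<in> K \<Longrightarrow> x \<otimes> y = y \<otimes> x"
    and s: "s \<in> carrier G"
    and commutators: "\<And>x. x \<in> K \<Longrightarrow> x \<otimes> s \<otimes> inv x \<otimes> inv s \<in> {\<one>, c}"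
    and k: "k \<in> K"
  shows "s \<otimes> s \<in> centralizer G k"
proof -
  interpret K: normal K G by (rule assms(1))
  have Kc: "x \<in> K \<Longrightarrow> x \<in> carrier G" for x using K.subset by blast
  define \<phi> where "\<phi> x = s \<otimes> x \<otimes> inv s" for x
  define \<psi> where "\<psi> x = x \<otimes> s \<otimes> inv x \<otimes> inv s" for x
  txt \<open>Since K is abelian, \<psi> is multiplicative on K and commutes with \<phi>; so its value d on k
    satisfies d \<otimes> d = \<one> and \<phi> d = d, and then \<phi> k = d \<otimes> k gives \<phi> (\<phi> k) = k.\<close>
  have \<phi>c: "\<phi> x \<in> carrier G" if "x \<in> carrier G" for x
    unfolding \<phi>_def using that s by simp
  have \<phi>_eq_one: "\<phi> x = \<one> \<longleftrightarrow> x = \<one>" if "x \<in> carrier G" for x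
    unfolding \<phi>_def using that s inv_equality by force
  have \<phi>K: "\<phi> x \<in> K" if "x \<in> K" for x
    unfolding \<phi>_def using K.inv_op_closed2[OF s that] .
  have \<phi>_mult: "\<phi> (x \<otimes> y) = \<phi> x \<otimes> \<phi> y" if "x \<in> carrier G" "y \<in> carrier G" for x y
    unfolding \<phi>_def using that s by (simp add: m_assoc inv_mult_cancel_left mult_inv_cancel_left)
  have \<psi>_\<phi>: "\<psi> x = x \<otimes> \<phi> (inv x)" if "x \<in> carrier G" for x
    unfolding \<phi>_def \<psi>_def using that s by (simp add: m_assoc inv_mult_cancel_left mult_inv_cancel_left)
  have \<psi>K: "\<psi> x \<in> K" if "x \<in> K" for x
    using \<psi>_\<phi> Kc that \<phi>K by simp
  have \<psi>_mult: "\<psi> (x \<otimes> y) = \<psi> x \<otimes> \<psi> y" if "x \<in> K" "y \<in> K" for x y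
  proof -
    have "\<psi> (x \<otimes> y) = x \<otimes> \<psi> y \<otimes> \<phi> (inv x)"
      using that Kc \<phi>_mult \<psi>_\<phi> \<phi>c by (simp add: inv_mult_group m_assoc inv_mult_cancel_left mult_inv_cancel_left)
    also have "\<dots> = \<psi> y \<otimes> \<psi> x"
      using that Kc \<psi>K \<phi>K \<psi>_\<phi> K_comm[of x "\<psi> y"] by (simp add: m_assoc inv_mult_cancel_left mult_inv_cancel_left)
    also have "\<dots> = \<psi> x \<otimes> \<psi> y"
      using that \<psi>K K_comm by simp
    finally show ?thesis .
  qed
  have \<psi>_\<phi>_comm: "\<psi> (\<phi> x) = \<phi> (\<psi> x)" if "x \<in> carrier G" for x
    unfolding \<phi>_def \<psi>_def using that s by (simp add: inv_mult_group m_assoc inv_mult_cancel_left mult_inv_cancel_left)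
  define d where "d = \<psi> k"
  have dc: "d \<in> carrier G" using \<psi>K k Kc d_def by simp
  have "d \<in> {\<one>, c}" "d \<otimes> d \<in> {\<one>, c}" "\<phi> d \<in> {\<one>, c}"
    using commutators[of k] commutators[of "k \<otimes> k"] commutators[of "\<phi> k"]
      \<psi>_mult[OF k k] \<psi>_\<phi>_comm[OF Kc[OF k]] k \<phi>K K.m_closed
    unfolding d_def \<psi>_def by auto
  then have dd: "d \<otimes> d = \<one>" and \<phi>d: "\<phi> d = d"
    using dc \<phi>_eq_one by auto
  have kc: "k \<in> carrier G" using Kc[OF k] .
  have "d \<otimes> \<phi> k = k \<otimes> (\<phi> (inv k) \<otimes> \<phi> k)"
    using kc \<phi>c by (simp add: d_def \<psi>_\<phi> m_assoc)
  also have "\<dots> = k \<otimes> \<phi> (inv k \<otimes> k)"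
    using kc by (simp only: \<phi>_mult inv_closed)
  finally have "d \<otimes> \<phi> k = k"
    using kc s by (simp add: \<phi>_def)
  then have \<phi>k: "\<phi> k = d \<otimes> k"
    using dd dc kc \<phi>c by (metis l_one m_assoc)
  have "\<phi> (\<phi> k) = k"
    using \<phi>d dd dc kc by (simp add: \<phi>k \<phi>_mult flip: m_assoc)
  then have "s \<otimes> s \<otimes> k = k \<otimes> (s \<otimes> s)"
    unfolding \<phi>_def using s kc by (metis inv_solve_right m_assoc m_closed inv_closed)
  then show ?thesis
    using s kc by (simp add: centralizer_def)
qed

lemma (in group) commutators_in_pair_if_conj_class_card_le_2:
  assumes "subgroup K G" "t \<in> carrier G"
    and "finite ((\<lambda>k. k \<otimes> t \<otimes> inv k) ` K)" "card ((\<lambda>k. k \<otimes> t \<otimes> inv k) ` K) \<le> 2"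
  obtains c where "\<And>k. k \<in> K \<Longrightarrow> k \<otimes> t \<otimes> inv k \<otimes> inv t \<in> {\<one>, c}"
proof -
  have "t = \<one> \<otimes> t \<otimes> inv \<one>" using assms(2) by simp
  then have "t \<in> (\<lambda>k. k \<otimes> t \<otimes> inv k) ` K"
    using subgroup.one_closed[OF assms(1)] by (rule image_eqI)
  then obtain w where w: "(\<lambda>k. k \<otimes> t \<otimes> inv k) ` K \<subseteq> {t, w}"
    using subset_pair_if_card_le_2[OF assms(3,4)] by blast
  have "k \<otimes> t \<otimes> inv k \<otimes> inv t \<in> {\<one>, w \<otimes> inv t}" if "k \<in> K" for k
    using w that assms(2) by auto
  then show ?thesis using that by blast
qed

lemma (in group) mem_centralizer_if_conj_class_card_le_2:
  assumes "K \<lhd> G" and K_comm: "\<And>x y. x \<in> K \<Longrightarrow> y \<in> K \<Longrightarrow> x \<otimes> y = y \<otimes> x"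
    and s: "s \<in> carrier G" "s [^] (q::nat) \<in> K" "odd q"
    and "finite ((\<lambda>k. k \<otimes> s \<otimes> inv k) ` K)" "card ((\<lambda>k. k \<otimes> s \<otimes> inv k) ` K) \<le> 2"
    and k: "k \<in> K"
  shows "s \<in> centralizer G k"
proof -
  interpret K: normal K G by (rule assms(1))
  obtain c where "\<And>x. x \<in> K \<Longrightarrow> x \<otimes> s \<otimes> inv x \<otimes> inv s \<in> {\<one>, c}"
    using commutators_in_pair_if_conj_class_card_le_2[OF K.subgroup_axioms s(1) assms(6,7)] by blast
  then have "s \<otimes> s \<in> centralizer G k"
    using square_centralizes_abelian_normal[OF assms(1) K_comm s(1) _ k] by blast
  moreover have "s [^] q \<in> centralizer G k"
    using K_comm[OF s(2) k] s(2) by (simp add: centralizer_def)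
  ultimately show ?thesis
    using mem_centralizer_odd_pow[OF K.subset[THEN subsetD, OF k] s(1) s(3)] by blast
qed

lemma (in group) card_rcosets_tower:
  assumes "finite (carrier G)" "subgroup K G" "subgroup C G" "K \<subseteq> C"
  shows "card (rcosets K) = card (rcosets C) * card (rcosets\<^bsub>G\<lparr>carrier := C\<rparr>\<^esub> K)"
proof -
  interpret C: group "G\<lparr>carrier := C\<rparr>" using subgroup_imp_group[OF assms(3)] .
  have "finite K" using finite_subset[OF _ assms(1)] subgroup.subset[OF assms(2)] .
  then have "card K > 0" using subgroup.one_closed[OF assms(2)] card_gt_0_iff by blast
  moreover have "card (rcosets K) * card K = card (carrier G)"
    using lagrange[OF assms(2)] by (simp add: order_def)
  moreover have "card (rcosets C) * card C = card (carrier G)"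
    using lagrange[OF assms(3)] by (simp add: order_def)
  moreover have "card (rcosets\<^bsub>G\<lparr>carrier := C\<rparr>\<^esub> K) * card K = card C"
    using C.lagrange[OF subgroup_incl[OF assms(2,3,4)]] by (simp add: order_def)
  ultimately show ?thesis
    by (metis mult.assoc mult_right_cancel less_numeral_extra(3))
qed

lemma (in group) comm_group_if_central_of_prime_index:
  assumes fin: "finite (carrier G)" and K: "subgroup K G"
    and prime: "Factorial_Ring.prime (card (rcosets K))"
    and central: "\<And>k g. k \<in> K \<Longrightarrow> g \<in> carrier G \<Longrightarrow> k \<otimes> g = g \<otimes> k"
  shows "comm_group G"
proof (rule group_comm_groupI)
  fix s g assume s: "s \<in> carrier G" and g: "g \<in> carrier G"
  let ?C = "centralizer G s"
  have C: "subgroup ?C G" using centralizer_subgroup[OF s] .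
  have KC: "K \<subseteq> ?C" using central s subgroup.subset[OF K] by (auto simp: centralizer_def)
  have "?C = carrier G"
  proof (cases "s \<in> K")
    case True
    then show ?thesis using central by (auto simp: centralizer_def)
  next
    case False
    have "card K \<noteq> card ?C"
    proof
      assume "card K = card ?C"
      then have "K = ?C"
        using card_subset_eq[OF finite_subset[OF subgroup.subset[OF C] fin] KC] by simp
      then show False using False s by (simp add: centralizer_def)
    qed
    then have "card (rcosets\<^bsub>G\<lparr>carrier := ?C\<rparr>\<^esub> K) \<noteq> 1"
      using group.lagrange[OF subgroup_imp_group[OF C] subgroup_incl[OF K C KC]]
      by (auto simp: order_def)
    then have "card (rcosets ?C) = 1"
      using prime card_rcosets_tower[OF fin K C KC] by (metis prime_product)
    then have "card ?C = card (carrier G)"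
      using lagrange[OF C] by (simp add: order_def)
    then show ?thesis
      using card_subset_eq[OF fin subgroup.subset[OF C]] by simp
  qed
  then have "g \<in> ?C" using g by simp
  then show "s \<otimes> g = g \<otimes> s" by (simp add: centralizer_def)
qed

lemma (in normal) pow_card_rcosets_mem:
  assumes "s \<in> carrier G"
  shows "s [^] card (rcosets H) \<in> H"
proof -
  have "H #> s \<in> carrier (G Mod H)" using rcosetsI[OF subset assms] by (simp add: FactGroup_def)
  then have "(H #> s) [^]\<^bsub>G Mod H\<^esub> card (rcosets H) = H"
    using group.pow_order_eq_1[OF factorgroup_is_group] by (simp add: order_def FactGroup_def)
  then have "H #> s [^] card (rcosets H) = H" by (simp add: FactGroup_pow[OF assms])
  then show ?thesis using rcos_self[OF nat_pow_closed[OF assms] subgroup_axioms] by metis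
qed

lemma finite_Bij: "finite L \<Longrightarrow> finite (Bij L)"
proof (rule finite_subset)
  show "Bij L \<subseteq> PiE L (\<lambda>_. L)"
  proof
    fix f assume "f \<in> Bij L"
    then show "f \<in> PiE L (\<lambda>_. L)"
      using Bij_imp_extensional[of f L] Bij_imp_funcset[of f L] by (simp add: PiE_def)
  qed
qed (simp add: finite_PiE)

lemma Bij_apply_mem: "g \<in> Bij L \<Longrightarrow> x \<in> L \<Longrightarrow> g x \<in> L"
  using Bij_imp_funcset funcset_mem by blast

lemma subgroup_BijGroup_subset_Bij:
  "subgroup S (BijGroup L) \<Longrightarrow> S \<subseteq> Bij L"
  using subgroup.subset by (fastforce simp: BijGroup_def)

lemma BijGroup_mult_apply [simp]:
  "g \<in> Bij L \<Longrightarrow> h \<in> Bij L \<Longrightarrow> x \<in> L \<Longrightarrow> (g \<otimes>\<^bsub>BijGroup L\<^esub> h) x = g (h x)"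
  by (simp add: BijGroup_def compose_def)

lemma BijGroup_mult_Bij [simp]:
  "g \<in> Bij L \<Longrightarrow> h \<in> Bij L \<Longrightarrow> g \<otimes>\<^bsub>BijGroup L\<^esub> h \<in> Bij L"
  by (simp add: BijGroup_def compose_Bij)

lemma BijGroup_one_apply [simp]:
  "x \<in> L \<Longrightarrow> \<one>\<^bsub>BijGroup L\<^esub> x = x"
  by (simp add: BijGroup_def)

lemma BijGroup_subgroup_action:
  assumes "subgroup S (BijGroup L)"
  shows "group_action ((BijGroup L)\<lparr>carrier := S\<rparr>) L (\<lambda>g. g)"
  unfolding group_action_def group_hom_def group_hom_axioms_def hom_def
  using group.subgroup_imp_group[OF group_BijGroup assms] group_BijGroup subgroup.subset[OF assms]
  by (auto simp: BijGroup_def)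

lemma card_orbit_eq_card_rcosets_stabilizer:
  assumes "subgroup S (BijGroup L)" and "x \<in> L"
  shows "card ((\<lambda>g. g x) ` S) = card (rcosets\<^bsub>(BijGroup L)\<lparr>carrier := S\<rparr>\<^esub> {g \<in> S. g x = x})"
proof -
  interpret group_action "(BijGroup L)\<lparr>carrier := S\<rparr>" L "\<lambda>g. g"
    using BijGroup_subgroup_action[OF assms(1)] .
  have "orbit ((BijGroup L)\<lparr>carrier := S\<rparr>) (\<lambda>g. g) x = (\<lambda>g. g x) ` S"
    by (auto simp: orbit_def)
  moreover have "stabilizer ((BijGroup L)\<lparr>carrier := S\<rparr>) (\<lambda>g. g) x = {g \<in> S. g x = x}"
    by (simp add: stabilizer_def)
  ultimately show ?thesis
    using bij_betw_same_card[OF orbit_stab_fun_is_bij[OF assms(2)]] by simp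
qed

lemma orbit_normal_subgroup_image:
  assumes "subgroup S (BijGroup L)" and "K \<lhd> (BijGroup L)\<lparr>carrier := S\<rparr>"
    and "g \<in> S" and "x \<in> L"
  shows "(\<lambda>k. k (g x)) ` K = g ` (\<lambda>k. k x) ` K"
proof -
  let ?G = "(BijGroup L)\<lparr>carrier := S\<rparr>"
  interpret G: group ?G using group.subgroup_imp_group[OF group_BijGroup assms(1)] .
  interpret K: normal K ?G by (rule assms(2))
  have SB: "a \<in> Bij L" if "a \<in> S" for a using subgroup_BijGroup_subset_Bij[OF assms(1)] that by blast
  have maps: "a y \<in> L" if "a \<in> S" "y \<in> L" for a y
    using Bij_apply_mem[OF SB] that .
  have g: "g \<in> carrier ?G" "inv\<^bsub>?G\<^esub> g \<in> carrier ?G" using assms(3) G.inv_closed by auto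
  have Kc: "k \<in> S" if "k \<in> K" for k using K.subset that by auto
  have cancel: "g ((inv\<^bsub>?G\<^esub> g) y) = y" "(inv\<^bsub>?G\<^esub> g) (g y) = y" if "y \<in> L" for y
  proof -
    have "(g \<otimes>\<^bsub>?G\<^esub> inv\<^bsub>?G\<^esub> g) y = y" "(inv\<^bsub>?G\<^esub> g \<otimes>\<^bsub>?G\<^esub> g) y = y"
      using G.r_inv[OF g(1)] G.l_inv[OF g(1)] that by simp_all
    then show "g ((inv\<^bsub>?G\<^esub> g) y) = y" "(inv\<^bsub>?G\<^esub> g) (g y) = y"
      using that g by (simp_all add: SB)
  qed
  show ?thesis
  proof (intro equalityI subsetI)
    fix y assume "y \<in> (\<lambda>k. k (g x)) ` K"
    then obtain k where k: "k \<in> K" and y: "y = k (g x)" by blast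
    have "inv\<^bsub>?G\<^esub> g \<otimes>\<^bsub>?G\<^esub> k \<otimes>\<^bsub>?G\<^esub> g \<in> K"
      using K.inv_op_closed1[OF g(1) k] .
    moreover have "y = g ((inv\<^bsub>?G\<^esub> g \<otimes>\<^bsub>?G\<^esub> k \<otimes>\<^bsub>?G\<^esub> g) x)"
      using y g k Kc assms(3,4) by (simp add: SB maps cancel)
    ultimately show "y \<in> g ` (\<lambda>k. k x) ` K" by blast
  next
    fix y assume "y \<in> g ` (\<lambda>k. k x) ` K"
    then obtain k where k: "k \<in> K" and y: "y = g (k x)" by blast
    have "g \<otimes>\<^bsub>?G\<^esub> k \<otimes>\<^bsub>?G\<^esub> inv\<^bsub>?G\<^esub> g \<in> K"
      using K.inv_op_closed2[OF g(1) k] .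
    moreover have "y = (g \<otimes>\<^bsub>?G\<^esub> k \<otimes>\<^bsub>?G\<^esub> inv\<^bsub>?G\<^esub> g) (g x)"
      using y g k Kc assms(3,4) by (simp add: SB maps cancel)
    ultimately show "y \<in> (\<lambda>k. k (g x)) ` K" by blast
  qed
qed

lemma comm_group_if_orbits_card_le_2:
  assumes K: "subgroup K (BijGroup L)" and "finite L"
    and orbits: "\<And>x. x \<in> L \<Longrightarrow> card ((\<lambda>k. k x) ` K) \<le> 2"
  shows "comm_group ((BijGroup L)\<lparr>carrier := K\<rparr>)"
proof (rule group.group_comm_groupI)
  show "group ((BijGroup L)\<lparr>carrier := K\<rparr>)"
    using group.subgroup_imp_group[OF group_BijGroup K] .
  have KB: "k \<in> Bij L" if "k \<in> K" for k using subgroup_BijGroup_subset_Bij[OF K] that by blast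
  fix a b assume "a \<in> carrier ((BijGroup L)\<lparr>carrier := K\<rparr>)" "b \<in> carrier ((BijGroup L)\<lparr>carrier := K\<rparr>)"
  then have a: "a \<in> K" and b: "b \<in> K" by simp_all
  show "a \<otimes>\<^bsub>(BijGroup L)\<lparr>carrier := K\<rparr>\<^esub> b = b \<otimes>\<^bsub>(BijGroup L)\<lparr>carrier := K\<rparr>\<^esub> a"
  proof (rule extensionalityI[of _ L])
    show "a \<otimes>\<^bsub>(BijGroup L)\<lparr>carrier := K\<rparr>\<^esub> b \<in> extensional L"
      "b \<otimes>\<^bsub>(BijGroup L)\<lparr>carrier := K\<rparr>\<^esub> a \<in> extensional L"
      using a b KB by (simp_all add: Bij_imp_extensional)
  next
    fix x assume x: "x \<in> L"
    let ?O = "(\<lambda>k. k x) ` K"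
    have "?O \<subseteq> L" using Bij_apply_mem[OF KB x] by blast
    then have "finite ?O" using \<open>finite L\<close> finite_subset by blast
    have "x \<in> ?O" using x subgroup.one_closed[OF K] BijGroup_one_apply[OF x] by (metis image_eqI)
    obtain w where w: "?O \<subseteq> {x, w}"
      by (rule subset_pair_if_card_le_2[OF \<open>finite ?O\<close> orbits[OF x] \<open>x \<in> ?O\<close>])
    have maps: "k ` ?O \<subseteq> ?O" if k: "k \<in> K" for k
    proof
      fix y assume "y \<in> k ` ?O"
      then obtain k' where k': "k' \<in> K" and "y = k (k' x)" by blast
      then have "y = (k \<otimes>\<^bsub>BijGroup L\<^esub> k') x" using k x KB by simp
      then show "y \<in> ?O" using subgroup.m_closed[OF K k k'] by (rule image_eqI)
    qed
    have inj: "inj_on k ?O" if "k \<in> K" for k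
      using KB[OF that] \<open>?O \<subseteq> L\<close> by (auto simp: Bij_def bij_betw_def intro: inj_on_subset)
    have "a (b x) = b (a x)"
      using commute_on_two_point_set[OF w \<open>x \<in> ?O\<close> inj[OF a] inj[OF b] maps[OF a] maps[OF b]] .
    then show "(a \<otimes>\<^bsub>(BijGroup L)\<lparr>carrier := K\<rparr>\<^esub> b) x = (b \<otimes>\<^bsub>(BijGroup L)\<lparr>carrier := K\<rparr>\<^esub> a) x"
      using a b x KB by simp
  qed
qed

lemma stabilizer_trivial_if_comm_transitive:
  assumes S: "subgroup S (BijGroup L)" and "comm_group ((BijGroup L)\<lparr>carrier := S\<rparr>)"
    and "e \<in> L" and transitive: "\<And>x. x \<in> L \<Longrightarrow> \<exists>g \<in> S. g e = x"
  shows "{g \<in> S. g e = e} = {\<one>\<^bsub>BijGroup L\<^esub>}"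
proof (intro equalityI subsetI)
  have SB: "g \<in> Bij L" if "g \<in> S" for g using subgroup_BijGroup_subset_Bij[OF S] that by blast
  fix h assume "h \<in> {g \<in> S. g e = e}"
  then have h: "h \<in> S" "h e = e" by simp_all
  have "h x = x" if x: "x \<in> L" for x
  proof -
    obtain g where g: "g \<in> S" "g e = x" using transitive[OF x] by blast
    have "h \<otimes>\<^bsub>BijGroup L\<^esub> g = g \<otimes>\<^bsub>BijGroup L\<^esub> h"
      using comm_groupE(4)[OF assms(2)] h g by simp
    then have "(h \<otimes>\<^bsub>BijGroup L\<^esub> g) e = (g \<otimes>\<^bsub>BijGroup L\<^esub> h) e" by simp
    then have "h (g e) = g (h e)"
      using SB h(1) g(1) \<open>e \<in> L\<close> by simp
    then show ?thesis using g h by simp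
  qed
  then show "h \<in> {\<one>\<^bsub>BijGroup L\<^esub>}"
    using SB[OF h(1)] by (auto simp: BijGroup_def Bij_def intro: extensionalityI)
next
  fix h assume "h \<in> {\<one>\<^bsub>BijGroup L\<^esub>}"
  then show "h \<in> {g \<in> S. g e = e}"
    using subgroup.one_closed[OF S] \<open>e \<in> L\<close> by simp
qed

locale loop_envelope =
  fixes L :: "'a set" and m :: "'a \<Rightarrow> 'a \<Rightarrow> 'a" and e :: 'a
  assumes loop: "is_loop L m e"
begin

lemma identity_mem: "e \<in> L"
  using loop[unfolded is_loop_def] by (rule conjunct1)

lemma mult_closed: "x \<in> L \<Longrightarrow> y \<in> L \<Longrightarrow> m x y \<in> L"
  using loop[unfolded is_loop_def, THEN conjunct2, THEN conjunct1] by blast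

lemma left_identity: "x \<in> L \<Longrightarrow> m e x = x"
  using loop[unfolded is_loop_def, THEN conjunct2, THEN conjunct2, THEN conjunct1] by blast

lemma right_division: "a \<in> L \<Longrightarrow> b \<in> L \<Longrightarrow> \<exists>!y. y \<in> L \<and> m y a = b"
  using loop[unfolded is_loop_def, THEN conjunct2, THEN conjunct2, THEN conjunct2, THEN conjunct2]
  by blast

lemma Rmap_Bij:
  assumes "a \<in> L"
  shows "Rmap L m a \<in> Bij L"
proof -
  have closed: "m x a \<in> L" if "x \<in> L" for x using mult_closed that assms .
  have division: "\<exists>!y. y \<in> L \<and> m y a = b" if "b \<in> L" for b
    using right_division assms that .
  have "inj_on (\<lambda>x. m x a) L"
  proof (rule inj_onI)
    fix x y assume "x \<in> L" "y \<in> L" "m x a = m y a"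
    then show "x = y" using division[OF closed[OF \<open>x \<in> L\<close>]] by metis
  qed
  moreover have "(\<lambda>x. m x a) ` L = L"
  proof (intro equalityI subsetI)
    fix b assume "b \<in> L"
    then obtain y where "y \<in> L" "b = m y a" using division by metis
    then show "b \<in> (\<lambda>x. m x a) ` L" by blast
  qed (use closed in blast)
  ultimately have "bij_betw (\<lambda>x. m x a) L L"
    by (simp add: bij_betw_def)
  then have "bij_betw (\<lambda>x\<in>L. m x a) L L"
    by (rule bij_betw_cong[THEN iffD1, rotated]) simp
  then show ?thesis
    unfolding Bij_def Rmap_def by simp
qed

lemma Rmap_apply_identity: "a \<in> L \<Longrightarrow> Rmap L m a e = a"
  using identity_mem left_identity by (simp add: Rmap_def)

lemma env_G_eq: "env_G L m = (BijGroup L)\<lparr>carrier := carrier (env_G L m)\<rparr>"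
  by (simp add: env_G_def)

lemma env_T_subset_Bij: "env_T L m \<subseteq> carrier (BijGroup L)"
  using Rmap_Bij by (auto simp: env_T_def BijGroup_def)

lemma subgroup_env_G: "subgroup (carrier (env_G L m)) (BijGroup L)"
  using group.generate_is_subgroup[OF group_BijGroup env_T_subset_Bij] by (simp add: env_G_def)

lemma group_env_G: "group (env_G L m)"
  using group.subgroup_imp_group[OF group_BijGroup subgroup_env_G] env_G_eq by simp

lemma env_T_subset: "env_T L m \<subseteq> carrier (env_G L m)"
  by (auto simp: env_G_def intro: generate.incl)

lemma Rmap_mem: "a \<in> L \<Longrightarrow> Rmap L m a \<in> carrier (env_G L m)"
  using env_T_subset by (auto simp: env_T_def)

lemma subgroup_eq_env_G_if_env_T_subset:
  assumes "subgroup C (env_G L m)" "env_T L m \<subseteq> C"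
  shows "C = carrier (env_G L m)"
proof -
  have "subgroup C (BijGroup L)"
    using group.incl_subgroup[OF group_BijGroup subgroup_env_G] assms(1) env_G_eq by simp
  then have "generate (BijGroup L) (env_T L m) \<subseteq> C"
    using group.generate_subgroup_incl[OF group_BijGroup assms(2)] by blast
  then show ?thesis using subgroup.subset[OF assms(1)] by (auto simp: env_G_def)
qed

lemma inj_on_apply_identity_env_T: "inj_on (\<lambda>t. t e) (env_T L m)"
proof (rule inj_onI)
  fix s t assume "s \<in> env_T L m" "t \<in> env_T L m" "s e = t e"
  then show "s = t" by (auto simp: env_T_def Rmap_apply_identity)
qed

lemma subgroup_BijGroup_if_subgroup_env_G:
  assumes "subgroup K (env_G L m)"
  shows "subgroup K (BijGroup L)"
proof -
  have "subgroup K ((BijGroup L)\<lparr>carrier := carrier (env_G L m)\<rparr>)"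
    using assms env_G_eq by metis
  then show ?thesis using group.incl_subgroup[OF group_BijGroup subgroup_env_G] by blast
qed

lemma card_orbit_eq_index_of_env_H:
  assumes "K \<lhd> env_G L m" "env_H L m e \<subseteq> K" "x \<in> L"
  shows "card ((\<lambda>k. k x) ` K) = card (rcosets\<^bsub>(env_G L m)\<lparr>carrier := K\<rparr>\<^esub> env_H L m e)"
proof -
  have K_env: "K \<lhd> (BijGroup L)\<lparr>carrier := carrier (env_G L m)\<rparr>"
    using assms(1) env_G_eq by simp
  have K: "subgroup K (BijGroup L)"
    using subgroup_BijGroup_if_subgroup_env_G normal_imp_subgroup[OF assms(1)] by blast
  have "{k \<in> K. k e = e} = env_H L m e"
    using assms(2) normal_imp_subgroup[OF assms(1)] subgroup.subset by (fastforce simp: env_H_def)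
  then have orbit_e: "card ((\<lambda>k. k e) ` K) = card (rcosets\<^bsub>(env_G L m)\<lparr>carrier := K\<rparr>\<^esub> env_H L m e)"
    using card_orbit_eq_card_rcosets_stabilizer[OF K identity_mem] by (simp add: env_G_def)
  have "(\<lambda>k. k x) ` K = Rmap L m x ` (\<lambda>k. k e) ` K"
    using orbit_normal_subgroup_image[OF subgroup_env_G K_env Rmap_mem[OF assms(3)] identity_mem]
    by (simp add: Rmap_apply_identity[OF assms(3)])
  moreover have "inj_on (Rmap L m x) ((\<lambda>k. k e) ` K)"
  proof (rule inj_on_subset)
    show "inj_on (Rmap L m x) L" using Rmap_Bij[OF assms(3)] by (simp add: Bij_def bij_betw_def)
    have KB: "k \<in> Bij L" if "k \<in> K" for k using subgroup_BijGroup_subset_Bij[OF K] that by blast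
    show "(\<lambda>k. k e) ` K \<subseteq> L" using Bij_apply_mem[OF KB identity_mem] by blast
  qed
  ultimately show ?thesis using orbit_e by (simp add: card_image)
qed

lemma env_G_mult: "g \<otimes>\<^bsub>env_G L m\<^esub> h = g \<otimes>\<^bsub>BijGroup L\<^esub> h"
  by (simp add: env_G_def)

lemma conj_class_env_T_le_orbit:
  assumes "finite L" "rcc_loop L m e" "K \<lhd> env_G L m" "t \<in> env_T L m"
  defines "C \<equiv> (\<lambda>k. k \<otimes>\<^bsub>env_G L m\<^esub> t \<otimes>\<^bsub>env_G L m\<^esub> inv\<^bsub>env_G L m\<^esub> k) ` K"
  shows "finite C" and "card C \<le> card ((\<lambda>k. k (t e)) ` K)"
proof -
  let ?G = "env_G L m"
  interpret G: group ?G by (rule group_env_G)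
  interpret K: normal K ?G by (rule assms(3))
  have t: "t \<in> carrier ?G" using assms(4) env_T_subset by blast
  have rcc: "g \<otimes>\<^bsub>?G\<^esub> s \<otimes>\<^bsub>?G\<^esub> inv\<^bsub>?G\<^esub> g \<in> env_T L m"
    if "g \<in> carrier ?G" "s \<in> env_T L m" for g s
    using assms(2)[unfolded rcc_loop_def, THEN conjunct2] that by blast
  have CT: "C \<subseteq> env_T L m"
    unfolding C_def using rcc[OF _ assms(4)] K.subset by blast
  then show "finite C"
    using assms(1) finite_subset by (auto simp: env_T_def)
  have KB: "k \<in> Bij L" if "k \<in> K" for k
    using subgroup_BijGroup_subset_Bij[OF subgroup_env_G] K.subset that by blast
  have "(\<lambda>s. s e) ` C \<subseteq> (\<lambda>k. k (t e)) ` K"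
  proof
    fix y assume "y \<in> (\<lambda>s. s e) ` C"
    then obtain k where k: "k \<in> K" and y: "y = (k \<otimes>\<^bsub>?G\<^esub> t \<otimes>\<^bsub>?G\<^esub> inv\<^bsub>?G\<^esub> k) e"
      unfolding C_def by blast
    let ?k' = "k \<otimes>\<^bsub>?G\<^esub> (t \<otimes>\<^bsub>?G\<^esub> inv\<^bsub>?G\<^esub> k \<otimes>\<^bsub>?G\<^esub> inv\<^bsub>?G\<^esub> t)"
    have k': "?k' \<in> K" using K.m_closed[OF k K.inv_op_closed2[OF t K.m_inv_closed[OF k]]] .
    have "k \<otimes>\<^bsub>?G\<^esub> t \<otimes>\<^bsub>?G\<^esub> inv\<^bsub>?G\<^esub> k = ?k' \<otimes>\<^bsub>?G\<^esub> t"
      using k t K.subset by (simp add: G.m_assoc subsetD)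
    then have "y = (?k' \<otimes>\<^bsub>BijGroup L\<^esub> t) e" using y by (simp only: env_G_mult)
    then have "y = ?k' (t e)"
      using KB[OF k'] subgroup_BijGroup_subset_Bij[OF subgroup_env_G] t identity_mem
      by (simp add: subsetD)
    then show "y \<in> (\<lambda>k. k (t e)) ` K" using k' by blast
  qed
  moreover have "t e \<in> L"
    using assms(4) by (auto simp: env_T_def Rmap_apply_identity)
  then have "(\<lambda>k. k (t e)) ` K \<subseteq> L" using Bij_apply_mem[OF KB] by blast
  then have "finite ((\<lambda>k. k (t e)) ` K)" using assms(1) finite_subset by blast
  ultimately have "card ((\<lambda>s. s e) ` C) \<le> card ((\<lambda>k. k (t e)) ` K)"
    by (rule card_mono[rotated])
  then show "card C \<le> card ((\<lambda>k. k (t e)) ` K)"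
    using card_image[OF inj_on_subset[OF inj_on_apply_identity_env_T CT]] by simp
qed

lemma env_T_centralizes_normal_subgroup:
  assumes "finite L" "rcc_loop L m e" "K \<lhd> env_G L m" "env_H L m e \<subseteq> K"
    and "card (rcosets\<^bsub>(env_G L m)\<lparr>carrier := K\<rparr>\<^esub> env_H L m e) = 2"
    and "odd (card (rcosets\<^bsub>env_G L m\<^esub> K))"
    and "t \<in> env_T L m" "k \<in> K"
  shows "t \<in> centralizer (env_G L m) k"
proof -
  let ?G = "env_G L m"
  interpret G: group ?G by (rule group_env_G)
  have orbits: "card ((\<lambda>k. k x) ` K) \<le> 2" if "x \<in> L" for x
    using card_orbit_eq_index_of_env_H[OF assms(3,4) that] assms(5) by simp
  have "comm_group ((BijGroup L)\<lparr>carrier := K\<rparr>)"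
    using comm_group_if_orbits_card_le_2[OF _ assms(1) orbits]
      subgroup_BijGroup_if_subgroup_env_G normal_imp_subgroup[OF assms(3)] by blast
  then have K_comm: "x \<otimes>\<^bsub>?G\<^esub> y = y \<otimes>\<^bsub>?G\<^esub> x" if "x \<in> K" "y \<in> K" for x y
    using comm_groupE(4) that by (fastforce simp: env_G_mult)
  have t: "t \<in> carrier ?G" using assms(7) env_T_subset by blast
  have "t e \<in> L" using assms(7) by (auto simp: env_T_def Rmap_apply_identity)
  then have "card ((\<lambda>k. k \<otimes>\<^bsub>?G\<^esub> t \<otimes>\<^bsub>?G\<^esub> inv\<^bsub>?G\<^esub> k) ` K) \<le> 2"
    using conj_class_env_T_le_orbit(2)[OF assms(1,2,3,7)] orbits by (meson order_trans)
  then show ?thesis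
    using G.mem_centralizer_if_conj_class_card_le_2[OF assms(3) K_comm t
        normal.pow_card_rcosets_mem[OF assms(3) t] assms(6)
        conj_class_env_T_le_orbit(1)[OF assms(1,2,3,7)] _ assms(8)] by blast
qed

lemma central_if_env_T_centralizes:
  assumes "k \<in> carrier (env_G L m)" "\<And>t. t \<in> env_T L m \<Longrightarrow> t \<in> centralizer (env_G L m) k"
    and "g \<in> carrier (env_G L m)"
  shows "k \<otimes>\<^bsub>env_G L m\<^esub> g = g \<otimes>\<^bsub>env_G L m\<^esub> k"
proof -
  have "centralizer (env_G L m) k = carrier (env_G L m)"
    using subgroup_eq_env_G_if_env_T_subset[OF group.centralizer_subgroup[OF group_env_G assms(1)]]
      assms(2) by blast
  then have "g \<in> centralizer (env_G L m) k" using assms(3) by simp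
  then show ?thesis by (simp add: centralizer_def)
qed

lemma finite_env_G: "finite L \<Longrightarrow> finite (carrier (env_G L m))"
  using finite_Bij subgroup_BijGroup_subset_Bij[OF subgroup_env_G] finite_subset by blast

lemma env_H_trivial_if_comm_group:
  assumes "comm_group (env_G L m)"
  shows "env_H L m e = {\<one>\<^bsub>env_G L m\<^esub>}"
proof -
  have "comm_group ((BijGroup L)\<lparr>carrier := carrier (env_G L m)\<rparr>)"
    using assms by (simp add: env_G_def)
  moreover have "\<exists>g \<in> carrier (env_G L m). g e = x" if "x \<in> L" for x
    using Rmap_mem[OF that] Rmap_apply_identity[OF that] by blast
  ultimately have "env_H L m e = {\<one>\<^bsub>BijGroup L\<^esub>}"
    unfolding env_H_def by (rule stabilizer_trivial_if_comm_transitive[OF subgroup_env_G _ identity_mem])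
  then show ?thesis by (simp add: env_G_def)
qed

end

theorem lemma5p11:
  fixes L :: "'a set" and m :: "'a \<Rightarrow> 'a \<Rightarrow> 'a" and e :: 'a
    and q :: nat and K :: "('a \<Rightarrow> 'a) set"
  assumes "Factorial_Ring.prime q" and "odd q"
    and "finite L" and "rcc_loop L m e" and "card L = 2 * q"
    and "subgroup K (env_G L m)"
    and "env_H L m e \<subset> K" and "K \<subset> carrier (env_G L m)"
    and "card (rcosets\<^bsub>env_G L m\<^esub> K) = q"
    and "card (rcosets\<^bsub>(env_G L m)\<lparr>carrier := K\<rparr>\<^esub> (env_H L m e)) = 2"
    and "K \<lhd> env_G L m"
  shows "comm_group (env_G L m) \<and> env_H L m e = {\<one>\<^bsub>env_G L m\<^esub>}"
proof -
  interpret loop_envelope L m e using assms(4) by (simp add: loop_envelope_def rcc_loop_def)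
  interpret G: group "env_G L m" by (rule group_env_G)
  have K_central: "k \<otimes>\<^bsub>env_G L m\<^esub> g = g \<otimes>\<^bsub>env_G L m\<^esub> k"
    if "k \<in> K" "g \<in> carrier (env_G L m)" for k g
    using central_if_env_T_centralizes env_T_centralizes_normal_subgroup[OF assms(3,4,11)]
      assms(2,7,8,9,10) that by blast
  have "comm_group (env_G L m)"
    using G.comm_group_if_central_of_prime_index[OF finite_env_G[OF assms(3)] assms(6) _ K_central]
      assms(1,9) by blast
  then show ?thesis using env_H_trivial_if_comm_group by blast
qed

end
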